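(* Let $A$ be a Banach lattice algebra. Then $BP_l(A)\cap BP_r(A)\subseteq BP(A)$, and the sets $BP(A)$, $BP_l(A)$, $BP_r(A)$ are norm closed. If moreover $A$ has an identity $e$, then $BP_l(A)=OI(A)=BP_r(A)$; in particular $OI(A)\subseteq BP(A)$.
   Context: A Banach lattice algebra is a real Banach lattice $A$ with an associative bilinear product making it a Banach algebra such that $xy\ge0$ whenever $x,y\ge0$; identity $e$ means a multiplicative identity with $\|e\|=1$. $L_a(x)=ax$, $R_a(x)=xa$. A band projection on a Banach lattice $X$ is an operator $P$ with $P^2=P$, $0\le P\le I_X$. $BP(A)=\{a\in A_+: L_aR_a\text{ is a band projection}\}$, $BP_l(A)=\{a\in A_+: L_a\text{ is a band projection}\}$, $BP_r(A)=\{a\in A_+: R_a\text{ is a band projection}\}$, $OI(A)=\{p: p^2=p,\ 0\le p\le e\}$. *)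

theory Defs
  imports "HOL-Analysis.Analysis"
begin

class banach_lattice = banach + ordered_real_vector + lattice +
  assumes lattice_norm: "sup x (- x) \<le> sup y (- y) \<Longrightarrow> norm x \<le> norm y"

class banach_lattice_algebra = banach_lattice + real_normed_algebra +
  assumes mult_pos: "0 \<le> x \<Longrightarrow> 0 \<le> y \<Longrightarrow> 0 \<le> x * y"

definition band_projection :: "('a::banach_lattice \<Rightarrow> 'a) \<Rightarrow> bool" where
  "band_projection P \<longleftrightarrow> bounded_linear P \<and> (P \<circ> P = P)
     \<and> (\<forall>x. 0 \<le> x \<longrightarrow> 0 \<le> P x \<and> P x \<le> x)"

definition L_op :: "'a::banach_lattice_algebra \<Rightarrow> 'a \<Rightarrow> 'a" where
  "L_op a = (\<lambda>x. a * x)"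

definition R_op :: "'a::banach_lattice_algebra \<Rightarrow> 'a \<Rightarrow> 'a" where
  "R_op a = (\<lambda>x. x * a)"

definition BP :: "'a::banach_lattice_algebra set" where
  "BP = {a. 0 \<le> a \<and> band_projection (L_op a \<circ> R_op a)}"

definition BP_l :: "'a::banach_lattice_algebra set" where
  "BP_l = {a. 0 \<le> a \<and> band_projection (L_op a)}"

definition BP_r :: "'a::banach_lattice_algebra set" where
  "BP_r = {a. 0 \<le> a \<and> band_projection (R_op a)}"

definition is_identity :: "'a::banach_lattice_algebra \<Rightarrow> bool" where
  "is_identity e \<longleftrightarrow> (\<forall>x. e * x = x \<and> x * e = x) \<and> norm e = 1"

definition OI :: "'a::banach_lattice_algebra \<Rightarrow> 'a set" where
  "OI e = {p. p * p = p \<and> 0 \<le> p \<and> p \<le> e}"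

end

theory Submission
  imports Defs "HOL-Library.Lattice_Algebras"
begin

text \<open>The operators \<open>L\<^sub>a\<close> and \<open>R\<^sub>a\<close> commute by associativity, and a composite of commuting
  band projections is a band projection; this gives \<open>BP\<^sub>l \<inter> BP\<^sub>r \<subseteq> BP\<close>. Each of the three
  sets is cut out by the closed positive cone and by order and idempotency conditions depending
  continuously on \<open>a\<close>, hence is closed.
  For an identity \<open>e = u - v\<close> with \<open>u = e\<^sup>+\<close>, \<open>v = e\<^sup>-\<close>, the equations \<open>u = eu\<close> and \<open>v = ve\<close> give
  \<open>u\<^sup>2 \<ge> u + v\<close> and \<open>vu \<ge> v\<close>, so \<open>u\<^sup>n\<^sup>+\<^sup>1 \<ge> u + nv\<close> while \<open>\<parallel>u\<^sup>n\<^sup>+\<^sup>1\<parallel> \<le> 1\<close>; thus \<open>v = 0\<close> and \<open>e \<ge> 0\<close>.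
  Then \<open>a \<in> BP\<^sub>l\<close> yields \<open>a = ae\<close> idempotent with \<open>a = ae \<le> e\<close>, and conversely an order
  idempotent \<open>p \<le> e\<close> satisfies \<open>px \<le> ex = x\<close> for \<open>x \<ge> 0\<close>; symmetrically for \<open>BP\<^sub>r\<close>.\<close>

subclass (in banach_lattice) lattice_ab_group_add ..

lemma sup_neg_nonneg: "0 \<le> sup a (- a :: 'a::lattice_ab_group_add)"
proof -
  have "a + - a \<le> sup a (- a) + sup a (- a)"
    by (intro add_mono) auto
  then show ?thesis by simp
qed

lemma sup_neg_eq_self: "0 \<le> x \<Longrightarrow> sup x (- x :: 'a::lattice_ab_group_add) = x"
  by (rule sup_absorb1) (meson neg_le_0_iff_le order_trans)

lemma norm_mono_nonneg:
  fixes x y :: "'a::banach_lattice"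
  assumes "0 \<le> x" "x \<le> y"
  shows "norm x \<le> norm y"
  using assms by (intro lattice_norm) (simp add: sup_neg_eq_self order_trans[OF assms])

lemma norm_nprt_le_dist_nonneg:
  fixes x y :: "'a::banach_lattice"
  assumes "0 \<le> y"
  shows "norm (nprt x) \<le> norm (x - y)"
proof (rule lattice_norm)
  have "sup (nprt x) (- nprt x) = - nprt x"
    using sup_neg_eq_self[of "- nprt x"] by (simp add: sup_commute)
  also have "\<dots> \<le> - nprt (x - y)"
    using assms by (simp add: nprt_mono)
  also have "\<dots> = pprt (y - x)"
    by (simp flip: pprt_neg)
  also have "\<dots> \<le> sup (x - y) (- (x - y))"
    using sup_neg_nonneg[of "x - y"] by (simp add: pprt_def)
  finally show "sup (nprt x) (- nprt x) \<le> sup (x - y) (- (x - y))" .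
qed

lemma closed_nonneg: "closed {x::'a::banach_lattice. 0 \<le> x}"
proof (subst closure_subset_eq[symmetric], intro subsetI)
  fix x :: 'a
  assume "x \<in> closure {x. 0 \<le> x}"
  then have "norm (nprt x) < e" if "e > 0" for e
    using that norm_nprt_le_dist_nonneg[of _ x]
    by (fastforce simp: closure_approachable dist_norm norm_minus_commute)
  then have "nprt x = 0"
    by (metis less_irrefl zero_less_norm_iff)
  then show "x \<in> {x. 0 \<le> x}"
    by (simp add: zero_le_iff_zero_nprt)
qed

lemma mult_left_mono_nonneg:
  "(x::'a::banach_lattice_algebra) \<le> y \<Longrightarrow> 0 \<le> z \<Longrightarrow> z * x \<le> z * y"
  using mult_pos[of z "y - x"] by (simp add: right_diff_distrib)

lemma mult_right_mono_nonneg: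
  "(x::'a::banach_lattice_algebra) \<le> y \<Longrightarrow> 0 \<le> z \<Longrightarrow> x * z \<le> y * z"
  using mult_pos[of "y - x" z] by (simp add: left_diff_distrib)

lemma band_projection_iff:
  assumes "bounded_linear P"
  shows "band_projection P \<longleftrightarrow>
    (\<forall>x. P (P x) = P x) \<and> (\<forall>x. 0 \<le> x \<longrightarrow> 0 \<le> P x \<and> P x \<le> x)"
  using assms by (auto simp: band_projection_def fun_eq_iff)

lemma band_projection_comp:
  assumes P: "band_projection P" and Q: "band_projection Q" and "P \<circ> Q = Q \<circ> P"
  shows "band_projection (P \<circ> Q)"
proof -
  have "P (Q (P (Q x))) = P (Q x)" for x
    using P Q \<open>P \<circ> Q = Q \<circ> P\<close> by (metis band_projection_def comp_apply)
  moreover have "0 \<le> P (Q x) \<and> P (Q x) \<le> x" if "0 \<le> x" for x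
    using P Q that unfolding band_projection_def by (meson order_trans)
  moreover have "bounded_linear (P \<circ> Q)"
    using P Q unfolding band_projection_def o_def by (blast intro: bounded_linear_compose)
  ultimately show ?thesis
    by (simp add: band_projection_iff)
qed

lemma closed_band_projections:
  fixes P :: "'b::topological_space \<Rightarrow> 'a::banach_lattice \<Rightarrow> 'a"
  assumes "\<And>a. bounded_linear (P a)" and cont: "continuous_on UNIV (\<lambda>(a, x). P a x)"
  shows "closed {a. band_projection (P a)}"
proof -
  have cont_P: "continuous_on UNIV (\<lambda>a. P a (f a))" if "continuous_on UNIV f" for f
    using continuous_on_compose2[OF cont continuous_on_Pair[OF continuous_on_id that]] by simp
  have eq: "{a. band_projection (P a)} = (\<Inter>x. {a. P a (P a x) = P a x})
      \<inter> (\<Inter>x\<in>{x. 0 \<le> x}. {a. 0 \<le> P a x} \<inter> {a. 0 \<le> x - P a x})"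
    by (auto simp: band_projection_iff assms(1))
  have c1: "closed {a. P a (P a x) = P a x}" for x
    by (intro closed_Collect_eq cont_P continuous_intros)
  have c2: "closed {a. 0 \<le> g a}" if "continuous_on UNIV g" for g :: "'b \<Rightarrow> 'a"
    using closed_vimage[OF closed_nonneg that] by (simp add: vimage_def)
  show ?thesis unfolding eq
    by (intro closed_Int closed_INT ballI c1 c2 cont_P continuous_intros)
qed

lemma L_op_comp_R_op_commute: "L_op a \<circ> R_op b = R_op b \<circ> L_op a"
  by (simp add: fun_eq_iff L_op_def R_op_def mult.assoc)

lemma BP_l_Int_BP_r_subset_BP: "BP_l \<inter> BP_r \<subseteq> BP"
  unfolding BP_l_def BP_r_def BP_def
  using band_projection_comp L_op_comp_R_op_commute by blast

lemma closed_BP_l: "closed BP_l"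
proof -
  have "closed {a::'a. band_projection (L_op a)}"
    by (rule closed_band_projections)
      (auto simp: L_op_def case_prod_beta bounded_linear_mult_right intro!: continuous_intros)
  then show ?thesis
    unfolding BP_l_def Collect_conj_eq by (intro closed_Int closed_nonneg)
qed

lemma closed_BP_r: "closed BP_r"
proof -
  have "closed {a::'a. band_projection (R_op a)}"
    by (rule closed_band_projections)
      (auto simp: R_op_def case_prod_beta bounded_linear_mult_left intro!: continuous_intros)
  then show ?thesis
    unfolding BP_r_def Collect_conj_eq by (intro closed_Int closed_nonneg)
qed

lemma closed_BP: "closed BP"
proof -
  have "bounded_linear (L_op a \<circ> R_op a)" for a :: 'a
    unfolding L_op_def R_op_def o_def
    by (rule bounded_linear_compose[OF bounded_linear_mult_right bounded_linear_mult_left])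
  then have "closed {a::'a. band_projection (L_op a \<circ> R_op a)}"
    by (rule closed_band_projections)
      (auto simp: L_op_def R_op_def case_prod_beta intro!: continuous_intros)
  then show ?thesis
    unfolding BP_def Collect_conj_eq by (intro closed_Int closed_nonneg)
qed

lemma norm_pprt_le: "norm (pprt x) \<le> norm (x::'a::banach_lattice)"
proof (rule lattice_norm)
  have "sup (pprt x) (- pprt x) = pprt x"
    by (simp add: sup_neg_eq_self)
  also have "\<dots> \<le> sup x (- x)"
    using sup_neg_nonneg[of x] by (simp add: pprt_def)
  finally show "sup (pprt x) (- pprt x) \<le> sup x (- x)" .
qed

text \<open>\<open>u + n v\<close> is dominated by the \<open>(n+1)\<close>-st power of \<open>u\<close>, whose norm is at most one.\<close>
lemma eq_zero_if_dominated_by_contraction: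
  fixes u v :: "'a::banach_lattice_algebra"
  assumes "0 \<le> u" "0 \<le> v" "norm u \<le> 1" "u + v \<le> u * u" "v \<le> v * u"
  shows "v = 0"
proof -
  have dominated: "\<exists>w. u + real n *\<^sub>R v \<le> w \<and> norm w \<le> 1" for n
  proof (induction n)
    case 0
    then show ?case using assms(3) by auto
  next
    case (Suc n)
    then obtain w where w: "u + real n *\<^sub>R v \<le> w" "norm w \<le> 1" by blast
    have "u + real (Suc n) *\<^sub>R v = (u + v) + real n *\<^sub>R v"
      by (simp add: scaleR_left_distrib algebra_simps)
    also have "\<dots> \<le> u * u + real n *\<^sub>R (v * u)"
      using assms(4,5) by (intro add_mono scaleR_left_mono) auto
    also have "\<dots> = (u + real n *\<^sub>R v) * u"
      by (simp add: distrib_right)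
    also have "\<dots> \<le> w * u"
      using w(1) assms(1) by (rule mult_right_mono_nonneg)
    finally have "u + real (Suc n) *\<^sub>R v \<le> w * u" .
    moreover have "norm (w * u) \<le> 1"
      using norm_mult_ineq[of w u] mult_mono[OF w(2) assms(3)] by simp
    ultimately show ?case by blast
  qed
  have "real n * norm v \<le> 1" for n
  proof -
    obtain w where w: "u + real n *\<^sub>R v \<le> w" "norm w \<le> 1"
      using dominated by blast
    have "0 \<le> real n *\<^sub>R v"
      using assms(2) by (simp add: scaleR_nonneg_nonneg)
    moreover have "real n *\<^sub>R v \<le> w"
      using w(1) assms(1) by (simp add: add_increasing order_trans[rotated])
    ultimately have "norm (real n *\<^sub>R v) \<le> norm w"
      by (rule norm_mono_nonneg)
    then show ?thesis
      using w(2) by simp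
  qed
  then show "v = 0"
    by (metis ex_less_of_nat_mult not_le zero_less_norm_iff)
qed

lemma identity_nonneg:
  fixes e :: "'a::banach_lattice_algebra"
  assumes "is_identity e"
  shows "0 \<le> e"
proof -
  define u v where "u = pprt e" and "v = - nprt e"
  have e: "e = u - v"
    using prts[of e] by (simp add: u_def v_def)
  have u0: "0 \<le> u" and v0: "0 \<le> v"
    by (simp_all add: u_def v_def)
  have uu: "u * u = u + v * u" and vu: "v * u = v + v * v"
    using assms by (metis is_identity_def e left_diff_distrib right_diff_distrib diff_eq_eq)+
  have "v \<le> v * u"
    using vu mult_pos[OF v0 v0] by simp
  moreover from this have "u + v \<le> u * u"
    using uu by simp
  moreover have "norm u \<le> 1"
    using assms norm_pprt_le[of e] by (simp add: u_def is_identity_def)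
  ultimately have "v = 0"
    using u0 v0 by (intro eq_zero_if_dominated_by_contraction)
  with u0 show ?thesis
    by (simp add: e)
qed

lemma BP_l_eq_OI:
  fixes e :: "'a::banach_lattice_algebra"
  assumes e: "is_identity e"
  shows "BP_l = OI e"
proof (intro set_eqI iffI)
  fix a :: 'a assume "a \<in> BP_l"
  then have "0 \<le> a" "a * (a * e) = a * e" "a * e \<le> e"
    using identity_nonneg[OF e]
    by (auto simp: BP_l_def band_projection_def L_op_def fun_eq_iff)
  then show "a \<in> OI e"
    using e by (simp add: OI_def is_identity_def)
next
  fix a :: 'a assume "a \<in> OI e"
  then have "a * a = a" "0 \<le> a" "a \<le> e"
    by (auto simp: OI_def)
  moreover have "a * x \<le> x" if "0 \<le> x" for x
    using mult_right_mono_nonneg[OF \<open>a \<le> e\<close> that] e by (simp add: is_identity_def)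
  ultimately show "a \<in> BP_l"
    by (simp add: BP_l_def L_op_def band_projection_iff bounded_linear_mult_right mult_pos
        flip: mult.assoc)
qed

lemma BP_r_eq_OI:
  fixes e :: "'a::banach_lattice_algebra"
  assumes e: "is_identity e"
  shows "BP_r = OI e"
proof (intro set_eqI iffI)
  fix a :: 'a assume "a \<in> BP_r"
  then have "0 \<le> a" "(e * a) * a = e * a" "e * a \<le> e"
    using identity_nonneg[OF e]
    by (auto simp: BP_r_def band_projection_def R_op_def fun_eq_iff)
  then show "a \<in> OI e"
    using e by (simp add: OI_def is_identity_def)
next
  fix a :: 'a assume "a \<in> OI e"
  then have "a * a = a" "0 \<le> a" "a \<le> e"
    by (auto simp: OI_def)
  moreover have "x * a \<le> x" if "0 \<le> x" for x
    using mult_left_mono_nonneg[OF \<open>a \<le> e\<close> that] e by (simp add: is_identity_def)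
  ultimately show "a \<in> BP_r"
    by (simp add: BP_r_def R_op_def band_projection_iff bounded_linear_mult_left mult_pos mult.assoc)
qed

theorem mainTheorem18:
  shows "(BP_l \<inter> BP_r \<subseteq> (BP :: 'a::banach_lattice_algebra set))
    \<and> closed (BP :: 'a set) \<and> closed (BP_l :: 'a set) \<and> closed (BP_r :: 'a set)
    \<and> (\<forall>e::'a. is_identity e \<longrightarrow>
          BP_l = OI e \<and> OI e = BP_r \<and> OI e \<subseteq> BP)"
proof (intro conjI allI impI)
  fix e :: 'a
  assume e: "is_identity e"
  show "BP_l = OI e" and "OI e = BP_r"
    using BP_l_eq_OI[OF e] BP_r_eq_OI[OF e] by simp_all
  show "OI e \<subseteq> BP"
    using BP_l_Int_BP_r_subset_BP BP_l_eq_OI[OF e] BP_r_eq_OI[OF e] by blast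
qed (fact BP_l_Int_BP_r_subset_BP closed_BP closed_BP_l closed_BP_r)+

end
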